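(* Let $E$ be a fixed-point equation system whose interpretation restricts to a map $[\![E]\!]_{\le 1}\colon\mathbb{E}_{\le 1}(D)\to\mathbb{E}_{\le 1}(D)$. Then for every $d\in D$ and every $\epsilon>0$ there exists $\eta'\in\mathbb{E}(D)$ with $\mu[\![E]\!]_{\le 1}(d)-\epsilon<\eta'(d)\le\mu[\![E]\!]_{\le 1}(d)$ such that there exist: a fixed-point equation system $E'$ over the same predicate variables with $[\![E']\!]\le[\![E]\!]$; $u\in\mathbb{E}(D)$ with $[\![E']\!](u)\le u$; a function $r\colon D\to[0,\infty)$ with $(\mathsf{D}[\![E']\!])(r)+u\le r$; and such that $\eta'\le u$ and $\eta'\le[\![E']\!](\eta')$.
   Context: $\mathbb{E}(D)$ is the set of functions $D\to[0,\infty]$ with pointwise order and operations ($\infty+x=\infty$, $0\cdot\infty=0$, $r\cdot\infty=\infty$ for $r>0$); $\mathbb{E}_{\le 1}(D)$ is the subset of functions $D\to[0,1]$; for $x\ge y$ in $[0,\infty]$, $x-y$ is the least $z$ with $x=y+z$; $\mathbb{O}$ is the zero function; $(\mathsf{D}K)(\eta)=K(\eta)-K(\mathbb{O})$; $\mu$ denotes least fixed point. Quantitative formulas over predicate variables $X_1,\dots,X_n$ ($X_j$ of type $D_j\to\Omega$): $F ::= X_j(\tilde e)\mid t\mid F_1+F_2\mid t\cdot F\mid \mathbf{if}\ \varphi\ \mathbf{then}\ F_1\ \mathbf{else}\ F_2$ with $\tilde e$ expressions, $t$ a $[0,\infty)$-valued term, $\varphi$ boolean; interpreted by $[\![X_j(e)]\!](\eta)(v)=\eta_j([\![e]\!](v))$,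 $[\![t]\!](\eta)(v)=[\![t]\!](v)$, pointwise sum and scalar product, case distinction for conditionals. A fixed-point equation system $E=\{X_i(\tilde x_i)=_\mu F_i\}_{i=1}^n$ has interpretation $[\![E]\!](\eta)=([\![F_1]\!](\eta),\dots,[\![F_n]\!](\eta))$ on $\mathbb{E}(D)$, $D=\coprod_j D_j$. (The existence of the data $E',u,r$ with the stated conditions is what the paper calls provability of $\eta'\le\mu[\![E]\!]$ by its proof rule.) *)

theory Defs
  imports "HOL-Library.Extended_Nonnegative_Real"
begin

text \<open>The domain D is the coproduct of the D_j, represented as a
type 'd together with a map summand :: 'd => 'i telling which summand D_j an element lies in.
An atom X_j(e) is given by its (semantic) expression e, which maps the values of the
argument variables (an element of D) to an element of D_j, i.e. of D.
Terms t are semantic [0,\<infinity>)-valued functions, guards are semantic boolean functions.\<close>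

datatype 'd qform =
    Atom "'d \<Rightarrow> 'd"
  | Term "'d \<Rightarrow> ennreal"
  | Plus "'d qform" "'d qform"
  | Scale "'d \<Rightarrow> ennreal" "'d qform"
  | Ite "'d \<Rightarrow> bool" "'d qform" "'d qform"

fun wf_qform :: "'d qform \<Rightarrow> bool" where
  "wf_qform (Atom e) = True"
| "wf_qform (Term t) = (\<forall>v. t v < \<infinity>)"
| "wf_qform (Plus F1 F2) = (wf_qform F1 \<and> wf_qform F2)"
| "wf_qform (Scale t F) = ((\<forall>v. t v < \<infinity>) \<and> wf_qform F)"
| "wf_qform (Ite \<phi> F1 F2) = (wf_qform F1 \<and> wf_qform F2)"

fun sem_qform :: "'d qform \<Rightarrow> ('d \<Rightarrow> ennreal) \<Rightarrow> 'd \<Rightarrow> ennreal" where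
  "sem_qform (Atom e) \<eta> v = \<eta> (e v)"
| "sem_qform (Term t) \<eta> v = t v"
| "sem_qform (Plus F1 F2) \<eta> v = sem_qform F1 \<eta> v + sem_qform F2 \<eta> v"
| "sem_qform (Scale t F) \<eta> v = t v * sem_qform F \<eta> v"
| "sem_qform (Ite \<phi> F1 F2) \<eta> v = (if \<phi> v then sem_qform F1 \<eta> v else sem_qform F2 \<eta> v)"

text \<open>An equation system: one equation X_i(x_i) = F_i per index i; the argument variables
x_i of the equation for index i are valuated by the element d of D_i.\<close>
type_synonym ('i, 'd) eqsys = "'i \<Rightarrow> 'd qform"

definition wf_eqsys :: "('i, 'd) eqsys \<Rightarrow> bool" where
  "wf_eqsys E = (\<forall>i. wf_qform (E i))"

definition sem_eqsys :: "('d \<Rightarrow> 'i) \<Rightarrow> ('i, 'd) eqsys \<Rightarrow> ('d \<Rightarrow> ennreal) \<Rightarrow> 'd \<Rightarrow> ennreal" where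
  "sem_eqsys summand E \<eta> d = sem_qform (E (summand d)) \<eta> d"

definition qminus :: "ennreal \<Rightarrow> ennreal \<Rightarrow> ennreal" where
  "qminus x y = Inf {z. x = y + z}"

definition Dop :: "(('d \<Rightarrow> ennreal) \<Rightarrow> 'd \<Rightarrow> ennreal) \<Rightarrow> ('d \<Rightarrow> ennreal) \<Rightarrow> 'd \<Rightarrow> ennreal" where
  "Dop K \<eta> d = qminus (K \<eta> d) (K (\<lambda>_. 0) d)"

definition bounded1 :: "('d \<Rightarrow> ennreal) \<Rightarrow> bool" where
  "bounded1 \<eta> = (\<forall>d. \<eta> d \<le> 1)"

text \<open>Least fixed point of K restricted to the complete lattice E_{<=1}(D)
(Knaster-Tarski: infimum of the prefixed points in E_{<=1}(D)).\<close>
definition lfp_le1 :: "(('d \<Rightarrow> ennreal) \<Rightarrow> 'd \<Rightarrow> ennreal) \<Rightarrow> 'd \<Rightarrow> ennreal" where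
  "lfp_le1 K = Inf {\<eta>. bounded1 \<eta> \<and> K \<eta> \<le> \<eta>}"

end

theory Submission
  imports Defs
begin

text \<open>Under the restriction hypothesis the least fixed point of the semantics \<open>K\<close> among functions
bounded by 1 is its ordinary least fixed point, and \<open>K\<close> is \<omega>-continuous, so it is the supremum of
the Kleene iterates \<open>K\<^sup>k(0)\<close>; fix \<open>k\<close> with \<open>K\<^sup>k(0)(d)\<close> within \<open>\<epsilon>/2\<close> of it. Damping every equation
by a factor \<open>c < 1\<close> gives \<open>E'\<close> with semantics \<open>c K\<close>. Formulas are subhomogeneous
(\<open>a K(\<eta>) \<le> K(a \<eta>)\<close> for \<open>a \<le> 1\<close>), so \<open>(c K)\<^sup>k(0) \<ge> c\<^sup>k K\<^sup>k(0)\<close>, which loses at most another \<open>\<epsilon>/2\<close>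
once \<open>c\<^sup>k \<ge> 1 - \<epsilon>/2\<close>. This iterate is the post-fixed point \<open>\<eta>'\<close>, \<open>u = 1\<close> is a pre-fixed point of
\<open>c K\<close>, and the constant \<open>r = 1/(1 - c)\<close> works because superhomogeneity (\<open>K(a \<eta>) \<le> a K(\<eta>)\<close> for
\<open>a \<ge> 1\<close>) gives \<open>K(r) \<le> r K(1) \<le> r\<close>, hence \<open>D(c K)(r) + 1 \<le> c r + 1 = r\<close>.\<close>

lemma sup_continuous_sem_qform: "sup_continuous (sem_qform F)"
proof -
  have "sup_continuous (\<lambda>\<eta>. sem_qform F \<eta> v)" for v
    by (induction F arbitrary: v) (auto intro!: order_continuous_intros)
  then show ?thesis by (rule sup_continuous_fun)
qed

lemma sup_continuous_sem_eqsys: "sup_continuous (sem_eqsys summand E)"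
  unfolding sem_eqsys_def
  by (rule sup_continuous_fun) (rule sup_continuous_applyD[OF sup_continuous_sem_qform])

lemma sem_qform_mult_le: "(c::ennreal) \<le> 1 \<Longrightarrow> c * sem_qform F \<eta> v \<le> sem_qform F (\<lambda>x. c * \<eta> x) v"
proof (induction F arbitrary: v)
  case (Term t)
  then show ?case using mult_right_mono[of c 1 "t v"] by simp
next
  case (Scale t F)
  then have "t v * (c * sem_qform F \<eta> v) \<le> t v * sem_qform F (\<lambda>x. c * \<eta> x) v"
    by (simp add: mult_left_mono)
  then show ?case by (simp add: mult.left_commute)
qed (auto simp: distrib_left add_mono)

lemma sem_qform_mult_ge: "1 \<le> (c::ennreal) \<Longrightarrow> sem_qform F (\<lambda>x. c * \<eta> x) v \<le> c * sem_qform F \<eta> v"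
proof (induction F arbitrary: v)
  case (Term t)
  then show ?case using mult_right_mono[of 1 c "t v"] by simp
next
  case (Scale t F)
  then have "t v * sem_qform F (\<lambda>x. c * \<eta> x) v \<le> t v * (c * sem_qform F \<eta> v)"
    by (simp add: mult_left_mono)
  then show ?case by (simp add: mult.left_commute)
qed (auto simp: distrib_left add_mono)

lemma sem_eqsys_mult_le:
  "a \<le> 1 \<Longrightarrow> (\<lambda>x. a * sem_eqsys summand E \<eta> x) \<le> sem_eqsys summand E (\<lambda>x. a * \<eta> x)"
  by (simp add: sem_eqsys_def le_fun_def sem_qform_mult_le)

lemma sem_eqsys_mult_ge:
  "1 \<le> a \<Longrightarrow> sem_eqsys summand E (\<lambda>x. a * \<eta> x) \<le> (\<lambda>x. a * sem_eqsys summand E \<eta> x)"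
  by (simp add: sem_eqsys_def le_fun_def sem_qform_mult_ge)

lemma sem_eqsys_one_le_one:
  "(\<And>\<eta>. bounded1 \<eta> \<Longrightarrow> bounded1 (sem_eqsys summand E \<eta>))
    \<Longrightarrow> sem_eqsys summand E (\<lambda>_. 1) \<le> (\<lambda>_. 1)"
  by (simp add: bounded1_def le_fun_def)

definition scale_eqsys :: "ennreal \<Rightarrow> ('i, 'd) eqsys \<Rightarrow> ('i, 'd) eqsys" where
  "scale_eqsys c E i = Scale (\<lambda>_. c) (E i)"

lemma wf_scale_eqsys: "c < \<infinity> \<Longrightarrow> wf_eqsys E \<Longrightarrow> wf_eqsys (scale_eqsys c E)"
  by (simp add: wf_eqsys_def scale_eqsys_def)

lemma sem_scale_eqsys:
  "sem_eqsys summand (scale_eqsys c E) = (\<lambda>\<eta> x. c * sem_eqsys summand E \<eta> x)"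
  by (simp add: sem_eqsys_def scale_eqsys_def fun_eq_iff)

lemma sem_scale_eqsys_le:
  "c \<le> 1 \<Longrightarrow> sem_eqsys summand (scale_eqsys c E) \<eta> \<le> sem_eqsys summand E \<eta>"
  unfolding sem_scale_eqsys le_fun_def using mult_right_mono[of c 1] by simp

lemma qminus_le_self: "b \<le> a \<Longrightarrow> qminus a b \<le> a"
  unfolding qminus_def
  by (rule order_trans[OF Inf_lower[of "a - b"]]) (auto simp: add_diff_inverse_ennreal)

lemma lfp_le1_eq_lfp:
  assumes mono: "mono K" and one: "K (\<lambda>_. 1) \<le> (\<lambda>_. 1)"
  shows "lfp_le1 K = lfp K"
proof (rule antisym)
  have "bounded1 (lfp K)"
    using lfp_lowerbound[of K, OF one] by (simp add: bounded1_def le_fun_def)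
  then show "lfp_le1 K \<le> lfp K"
    unfolding lfp_le1_def by (intro Inf_lower) (simp add: lfp_fixpoint[OF mono])
  show "lfp K \<le> lfp_le1 K"
    unfolding lfp_le1_def lfp_def by (intro Inf_superset_mono) blast
qed

lemma funpow_scaled_ge:
  fixes K :: "('d \<Rightarrow> ennreal) \<Rightarrow> 'd \<Rightarrow> ennreal"
  assumes mono: "mono K"
    and sub: "\<And>a \<eta>. a \<le> 1 \<Longrightarrow> (\<lambda>x. a * K \<eta> x) \<le> K (\<lambda>x. a * \<eta> x)"
    and c: "c \<le> 1"
  shows "c ^ n * (K ^^ n) bot x \<le> ((\<lambda>\<eta> x. c * K \<eta> x) ^^ n) bot x"
proof (induction n arbitrary: x)
  case 0
  then show ?case by simp
next
  case (Suc n)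
  let ?\<psi> = "(K ^^ n) bot" and ?\<phi> = "((\<lambda>\<eta> x. c * K \<eta> x) ^^ n) bot"
  have "c ^ Suc n * K ?\<psi> x = c * (c ^ n * K ?\<psi> x)"
    by (simp add: mult.assoc)
  also have "\<dots> \<le> c * K (\<lambda>y. c ^ n * ?\<psi> y) x"
    using sub[of "c ^ n" ?\<psi>] c by (intro mult_left_mono) (auto simp: le_fun_def power_le_one)
  also have "\<dots> \<le> c * K ?\<phi> x"
    by (intro mult_left_mono monoD[OF mono, THEN le_funD] le_funI Suc.IH) simp
  finally show ?case by (simp only: funpow.simps comp_apply)
qed

lemma Dop_scaled_const_le:
  fixes K :: "('d \<Rightarrow> ennreal) \<Rightarrow> 'd \<Rightarrow> ennreal"
  assumes mono: "mono K"
    and super: "\<And>a \<eta>. 1 \<le> a \<Longrightarrow> K (\<lambda>x. a * \<eta> x) \<le> (\<lambda>x. a * K \<eta> x)"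
    and one: "K (\<lambda>_. 1) \<le> (\<lambda>_. 1)"
    and R: "1 \<le> R"
  shows "Dop (\<lambda>\<eta> x. c * K \<eta> x) (\<lambda>_. R) x \<le> c * R"
proof -
  have "K (\<lambda>_. 0) x \<le> K (\<lambda>_. R) x"
    by (intro monoD[OF mono, THEN le_funD]) (simp add: le_fun_def)
  then have "Dop (\<lambda>\<eta> x. c * K \<eta> x) (\<lambda>_. R) x \<le> c * K (\<lambda>_. R) x"
    unfolding Dop_def by (intro qminus_le_self mult_left_mono) simp_all
  also have "K (\<lambda>_. R) x \<le> R * K (\<lambda>_. 1) x"
    using super[OF R, of "\<lambda>_. 1"] by (simp add: le_fun_def)
  also have "K (\<lambda>_. 1) x \<le> 1"
    using one by (simp add: le_fun_def)
  finally show ?thesis by (simp add: mult_left_mono)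
qed

lemma exists_power_ge_one_minus:
  fixes e :: real
  assumes "0 < e"
  shows "\<exists>c. 0 \<le> c \<and> c < 1 \<and> 1 - e \<le> c ^ k"
proof -
  define \<delta> where "\<delta> = min 1 (e / (real k + 1))"
  have \<delta>: "0 < \<delta>" "\<delta> \<le> 1" using assms by (auto simp: \<delta>_def)
  have "real k * \<delta> \<le> real k * (e / (real k + 1))"
    by (rule mult_left_mono) (auto simp: \<delta>_def)
  also have "\<dots> \<le> e" using assms by (simp add: field_simps)
  finally have "1 - e \<le> 1 + real k * (- \<delta>)" by simp
  also have "\<dots> \<le> (1 + (- \<delta>)) ^ k"
    using \<delta> by (intro Bernoulli_inequality) simp
  finally show ?thesis using \<delta> by (intro exI[of _ "1 - \<delta>"]) simp
qed

lemma ennreal_le_scaled_add: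
  fixes c e :: real
  assumes "x \<le> 1" "0 \<le> c" "0 \<le> e" "1 - e \<le> c"
  shows "x \<le> ennreal c * x + ennreal e"
proof -
  obtain a where a: "x = ennreal a" "0 \<le> a" "a \<le> 1"
    using assms(1) by (cases x) (auto simp: top_unique)
  have "a \<le> c * a + e"
  proof (cases "c \<le> 1")
    case True
    then have "(1 - c) * a \<le> 1 - c" using a by (simp add: mult_left_le)
    then show ?thesis using assms(4) by (simp add: algebra_simps)
  next
    case False
    then show ?thesis using a assms(3) mult_right_mono[of 1 c a] by simp
  qed
  then have "ennreal a \<le> ennreal (c * a + e)" by (rule ennreal_leI)
  then show ?thesis using a assms by (simp add: ennreal_mult)
qed

lemma lfp_le1_sem_eqsys:
  assumes "\<And>\<eta>. bounded1 \<eta> \<Longrightarrow> bounded1 (sem_eqsys summand E \<eta>)"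
  shows "lfp_le1 (sem_eqsys summand E) = lfp (sem_eqsys summand E)"
  using assms
  by (intro lfp_le1_eq_lfp sem_eqsys_one_le_one sup_continuous_mono sup_continuous_sem_eqsys)

lemma funpow_scale_eqsys_le_lfp:
  assumes "c \<le> 1"
  shows "(sem_eqsys summand (scale_eqsys c E) ^^ k) bot \<le> lfp (sem_eqsys summand E)"
proof (rule Kleene_iter_lpfp)
  show "mono (sem_eqsys summand (scale_eqsys c E))"
    by (intro sup_continuous_mono sup_continuous_sem_eqsys)
  have "mono (sem_eqsys summand E)"
    by (intro sup_continuous_mono sup_continuous_sem_eqsys)
  then show "sem_eqsys summand (scale_eqsys c E) (lfp (sem_eqsys summand E)) \<le> lfp (sem_eqsys summand E)"
    using sem_scale_eqsys_le[OF assms, of summand E "lfp (sem_eqsys summand E)"]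
    by (simp add: lfp_fixpoint)
qed

lemma Dop_scale_eqsys_plus_one_le:
  fixes c :: real
  assumes one: "sem_eqsys summand E (\<lambda>_. 1) \<le> (\<lambda>_. 1)" and c: "0 \<le> c" "c < 1"
  defines "R \<equiv> ennreal (1 / (1 - c))"
  shows "Dop (sem_eqsys summand (scale_eqsys c E)) (\<lambda>_. R) x + 1 \<le> R"
proof -
  have "Dop (sem_eqsys summand (scale_eqsys c E)) (\<lambda>_. R) x \<le> ennreal c * R"
    unfolding sem_scale_eqsys using c one
    by (intro Dop_scaled_const_le sup_continuous_mono sup_continuous_sem_eqsys sem_eqsys_mult_ge)
      (auto simp: R_def)
  then have "Dop (sem_eqsys summand (scale_eqsys c E)) (\<lambda>_. R) x + 1 \<le> ennreal (c / (1 - c) + 1)"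
    using c by (simp add: R_def ennreal_mult[symmetric] ennreal_plus add_right_mono)
  also have "c / (1 - c) + 1 = 1 / (1 - c)"
    using c by (simp add: field_simps)
  finally show ?thesis by (simp add: R_def)
qed

lemma lfp_le1_less_scaled_iterate:
  fixes \<epsilon> :: real
  assumes restr: "\<And>\<eta>. bounded1 \<eta> \<Longrightarrow> bounded1 (sem_eqsys summand E \<eta>)"
    and eps: "0 < \<epsilon>"
  shows "\<exists>c k. 0 \<le> c \<and> c < 1 \<and> lfp_le1 (sem_eqsys summand E) d
           < (sem_eqsys summand (scale_eqsys (ennreal c) E) ^^ k) bot d + ennreal \<epsilon>"
proof -
  let ?K = "sem_eqsys summand E"
  have mono: "mono ?K" by (intro sup_continuous_mono sup_continuous_sem_eqsys)
  have iter_le_one: "(?K ^^ i) bot x \<le> 1" for i x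
    using Kleene_iter_lpfp[OF mono sem_eqsys_one_le_one[OF restr]] by (simp add: le_fun_def)
  have lfp_eq: "lfp_le1 ?K d = (SUP i. (?K ^^ i) bot d)"
    by (simp add: lfp_le1_sem_eqsys[OF restr] sup_continuous_lfp[OF sup_continuous_sem_eqsys] image_comp)
  have "(SUP i. (?K ^^ i) bot d) \<le> 1"
    by (rule SUP_least) (rule iter_le_one)
  then have "(SUP i. (?K ^^ i) bot d) \<noteq> \<infinity>"
    by (rule le_less_trans[THEN less_imp_neq]) simp
  then obtain k where k: "lfp_le1 ?K d < (?K ^^ k) bot d + ennreal (\<epsilon> / 2)"
    using SUP_approx_ennreal[of "\<epsilon> / 2" UNIV _ "\<lambda>i. (?K ^^ i) bot d", OF _ _ lfp_eq] eps lfp_eq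
    by auto
  obtain c where c: "0 \<le> c" "c < 1" "1 - \<epsilon> / 2 \<le> c ^ k"
    using exists_power_ge_one_minus[of "\<epsilon> / 2" k] eps by auto
  have "(?K ^^ k) bot d \<le> ennreal (c ^ k) * (?K ^^ k) bot d + ennreal (\<epsilon> / 2)"
    using c eps iter_le_one by (intro ennreal_le_scaled_add) auto
  also have "ennreal (c ^ k) * (?K ^^ k) bot d
      \<le> (sem_eqsys summand (scale_eqsys (ennreal c) E) ^^ k) bot d"
    unfolding sem_scale_eqsys ennreal_power[OF c(1), symmetric]
    using c by (intro funpow_scaled_ge mono sem_eqsys_mult_le) simp_all
  finally have "lfp_le1 ?K d < (sem_eqsys summand (scale_eqsys (ennreal c) E) ^^ k) bot d
      + ennreal (\<epsilon> / 2) + ennreal (\<epsilon> / 2)"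
    using k by (meson add_right_mono order_less_le_trans)
  then show ?thesis
    using c eps ennreal_plus[of "\<epsilon> / 2" "\<epsilon> / 2"] by (auto simp: add.assoc)
qed

theorem theorem4p9:
  fixes summand :: "'d \<Rightarrow> 'i::finite" and E :: "('i, 'd) eqsys"
    and d :: 'd and \<epsilon> :: real
  assumes wfE: "wf_eqsys E"
    and restr: "\<And>\<eta>. bounded1 \<eta> \<Longrightarrow> bounded1 (sem_eqsys summand E \<eta>)"
    and eps: "\<epsilon> > 0"
  shows "\<exists>\<eta>'. lfp_le1 (sem_eqsys summand E) d < \<eta>' d + ennreal \<epsilon>
           \<and> \<eta>' d \<le> lfp_le1 (sem_eqsys summand E) d
           \<and> (\<exists>E' u r. wf_eqsys E'
                \<and> (\<forall>\<eta>. sem_eqsys summand E' \<eta> \<le> sem_eqsys summand E \<eta>)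
                \<and> sem_eqsys summand E' u \<le> u
                \<and> (\<forall>x. r x < \<infinity>)
                \<and> (\<lambda>x. Dop (sem_eqsys summand E') r x + u x) \<le> r
                \<and> \<eta>' \<le> u
                \<and> \<eta>' \<le> sem_eqsys summand E' \<eta>')"
proof -
  let ?K = "sem_eqsys summand E"
  obtain c k where c: "0 \<le> c" "c < 1" and approx:
    "lfp_le1 ?K d < (sem_eqsys summand (scale_eqsys (ennreal c) E) ^^ k) bot d + ennreal \<epsilon>"
    using lfp_le1_less_scaled_iterate[OF restr eps] by blast
  define E' where "E' = scale_eqsys (ennreal c) E"
  define \<eta>' where "\<eta>' = (sem_eqsys summand E' ^^ k) bot"
  define u :: "'d \<Rightarrow> ennreal" where "u = (\<lambda>_. 1)"
  define r :: "'d \<Rightarrow> ennreal" where "r = (\<lambda>_. ennreal (1 / (1 - c)))"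
  have mono': "mono (sem_eqsys summand E')"
    by (intro sup_continuous_mono sup_continuous_sem_eqsys)
  have below: "\<forall>\<eta>. sem_eqsys summand E' \<eta> \<le> ?K \<eta>"
    using c by (simp add: E'_def sem_scale_eqsys_le)
  have one: "?K u \<le> u"
    unfolding u_def using restr by (rule sem_eqsys_one_le_one)
  then have one': "sem_eqsys summand E' u \<le> u"
    using below order_trans by blast
  have "lfp_le1 ?K d < \<eta>' d + ennreal \<epsilon>"
    using approx by (simp add: \<eta>'_def E'_def)
  moreover have "\<eta>' d \<le> lfp_le1 ?K d"
    using funpow_scale_eqsys_le_lfp[where c = "ennreal c" and summand = summand and E = E and k = k] c
    by (simp add: \<eta>'_def E'_def lfp_le1_sem_eqsys[OF restr] le_fun_def)
  moreover have "\<eta>' \<le> sem_eqsys summand E' \<eta>'"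
    using monoD[OF mono_funpow[OF mono'], of k "Suc k"] by (simp add: \<eta>'_def)
  moreover have "(\<lambda>x. Dop (sem_eqsys summand E') r x + u x) \<le> r"
    unfolding E'_def r_def u_def using c
    by (intro le_funI Dop_scale_eqsys_plus_one_le[OF one[unfolded u_def]])
  moreover have "\<forall>x. r x < \<infinity>" and "wf_eqsys E'"
    using wfE by (simp_all add: r_def E'_def wf_scale_eqsys)
  moreover have "\<eta>' \<le> u"
    unfolding \<eta>'_def using mono' one' by (rule Kleene_iter_lpfp)
  ultimately show ?thesis
    using below one' by blast
qed

end
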